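(* For every ${\bf F}(z)\in\hat\Lambda^{(s)}\otimes V$ and every $N\ge2$, $$(\bar\pi_{N-1}\otimes1)\big(\mathcal D{\bf F}\big)(x_1)=\mathcal D^{(N)}_1\,(\bar\pi_{N-1}\otimes1){\bf F}(x_1).$$
   Context: Fix $s\ge1$, $\beta\in{\mathbb C}$. Let $\hat\Lambda^{(s)}={\mathbb C}[p_{a,k}: a=1,\dots,s,\ k\ge0]$, $e_1,\dots,e_s$ the standard basis of ${\mathbb C}^s$, $V={\mathbb C}[z]\otimes{\mathbb C}^s$. For $c=1,\dots,s$: $\Phi_c(z)$ is the substitution $p_{c,k}\mapsto p_{c,k}+z^k$ ($k\ge0$), $\Phi_c^{-1}(z)$ the substitution $p_{c,k}\mapsto p_{c,k}-z^k$ ($k\ge0$), and $\varphi^-_c(z)=\sum_{k\ge0}p_{c,k}z^{-k}$. $\langle0|_+$ is the constant-term functional on $\hat\Lambda^{(s)}$. For ${\bf F}(z)=\sum_cF_c(z)\otimes e_c$ ($F_c\in\hat\Lambda^{(s)}[z]$), $(\bar\pi_{N-1}\otimes1){\bf F}(x_1)=\sum_{c_1,\dots,c_N}\langle0|_+\Phi_{c_N}(x_N)\cdots\Phi_{c_2}(x_2)F_{c_1}(x_1)\,e_{c_1}\otimes\cdots\otimes e_{c_N}$, a $({\mathbb C}^s)^{\otimes N}$-valued polynomial in $x_1,\dots,x_N$ (the $i$-th factor carries $x_i$). The operator $\mathcal D$ on $\hat\Lambda^{(s)}\otimes V$ is defined by $$\mathcal D(F_a(z)\otimes e_a)=\Big(z\frac{d}{dz}F_a(z)+\beta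 z\,\mathrm{Res}_{\xi}\sum_{c=1}^s\frac{1}{\xi^2(1-z/\xi)}\varphi^-_c(\xi)\Phi_c^{-1}(\xi)\Phi_c(z)F_a(\xi)\Big)\otimes e_a,$$ where $\frac{1}{1-z/\xi}=\sum_{m\ge0}z^m\xi^{-m}$ and $\mathrm{Res}_\xi$ takes the coefficient of $\xi^{-1}$. The Heckman–Dunkl operator acting on $({\mathbb C}^s)^{\otimes N}$-valued polynomials in $x_1,\dots,x_N$ is $\mathcal D^{(N)}_1=x_1\frac{\partial}{\partial x_1}+\beta\sum_{j\ne1}\frac{x_1}{x_1-x_j}(1-K_{1j})$, where $K_{1j}$ swaps the variables $x_1,x_j$ (not the tensor factors). *)

theory Defs
  imports "HOL-Analysis.Analysis" "HOL-Library.Poly_Mapping" "HOL-Computational_Algebra.Polynomial"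
begin

text \<open>The ring \<open>\<hat>\<Lambda>\<close> = C[p_{a,k}] as polynomials (finitely supported
  coefficient maps on monomials); the variable p_{a,k} is indexed by the pair (a,k).
  Elements of \<open>\<hat>\<Lambda>[z]\<close> are of type lam poly.\<close>
type_synonym lam = "(nat \<times> nat \<Rightarrow>\<^sub>0 nat) \<Rightarrow>\<^sub>0 complex"

definition lam_var :: "nat \<Rightarrow> nat \<Rightarrow> lam" where
  "lam_var a k = Poly_Mapping.single (Poly_Mapping.single (a, k) 1) 1"

definition lam_const :: "complex \<Rightarrow> lam" where
  "lam_const b = Poly_Mapping.single 0 b"

definition lam_subst :: "(nat \<times> nat \<Rightarrow> 'r::comm_ring_1) \<Rightarrow> (complex \<Rightarrow> 'r) \<Rightarrow> lam \<Rightarrow> 'r" where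
  "lam_subst \<sigma> \<iota> f = (\<Sum>mo\<in>Poly_Mapping.keys f. \<iota> (Poly_Mapping.lookup f mo) * (\<Prod>v\<in>Poly_Mapping.keys (mo::nat \<times> nat \<Rightarrow>\<^sub>0 nat). \<sigma> v ^ Poly_Mapping.lookup mo v))"

definition vac :: "lam \<Rightarrow> complex" where
  "vac f = Poly_Mapping.lookup f 0"

definition Phi :: "nat \<Rightarrow> complex \<Rightarrow> lam \<Rightarrow> lam" where
  "Phi c w f = lam_subst (\<lambda>(a, k). lam_var a k + (if a = c then lam_const (w ^ k) else 0)) lam_const f"

text \<open>The composite substitution Phi_c^{-1}(xi) Phi_c(z), i.e. p_{c,k} \<mapsto> p_{c,k} + z^k - xi^k,
  landing in \<open>\<hat>\<Lambda>[z][xi]\<close> (type lam poly poly: outer variable xi, inner variable z).\<close>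
definition PhiInvPhi :: "nat \<Rightarrow> lam \<Rightarrow> lam poly poly" where
  "PhiInvPhi c f = lam_subst
     (\<lambda>(a, k). [:[:lam_var a k:]:] + (if a = c then [:monom 1 k:] - monom 1 k else 0))
     (\<lambda>b. [:[:lam_const b:]:]) f"

text \<open>Formal Laurent series in xi^{-1} (coefficient of xi^n at index n), product and residue.\<close>
definition lmult :: "(int \<Rightarrow> 'r::comm_ring_1) \<Rightarrow> (int \<Rightarrow> 'r) \<Rightarrow> int \<Rightarrow> 'r" where
  "lmult A B = (\<lambda>n. \<Sum>i\<in>{i. A i \<noteq> 0 \<and> B (n - i) \<noteq> 0}. A i * B (n - i))"

definition lres :: "(int \<Rightarrow> 'r) \<Rightarrow> 'r" where
  "lres A = A (-1)"

text \<open>1/(xi^2 (1 - z/xi)) = sum_m z^m xi^{-m-2}\<close>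
definition kernel_ser :: "int \<Rightarrow> lam poly" where
  "kernel_ser n = (if n \<le> -2 then [:0, 1:] ^ nat (-n - 2) else 0)"

text \<open>phi^-_c(xi) = sum_k p_{c,k} xi^{-k}\<close>
definition phi_minus :: "nat \<Rightarrow> int \<Rightarrow> lam poly" where
  "phi_minus c n = (if n \<le> 0 then [:lam_var c (nat (-n)):] else 0)"

text \<open>The polynomial Phi_c^{-1}(xi) Phi_c(z) F_a(xi) in xi, as a Laurent series.\<close>
definition shifted_ser :: "nat \<Rightarrow> lam poly \<Rightarrow> int \<Rightarrow> lam poly" where
  "shifted_ser c Fa n =
     (let G = (\<Sum>j\<le>degree Fa. PhiInvPhi c (coeff Fa j) * monom 1 j)
      in if 0 \<le> n then coeff G (nat n) else 0)"

definition zddz :: "lam poly \<Rightarrow> lam poly" where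
  "zddz p = Poly (map (\<lambda>j. of_nat j * coeff p j) [0..<Suc (degree p)])"

text \<open>The operator D on \<open>\<hat>\<Lambda>\<otimes>V\<close>; F a is the component F_a(z) (a = 1..s).\<close>
definition Dop :: "nat \<Rightarrow> complex \<Rightarrow> (nat \<Rightarrow> lam poly) \<Rightarrow> nat \<Rightarrow> lam poly" where
  "Dop s \<beta> F a = zddz (F a)
     + [:0, lam_const \<beta>:] *
       (\<Sum>c=1..s. lres (lmult (lmult kernel_ser (phi_minus c)) (shifted_ser c (F a))))"

text \<open>(pi_{N-1} \<otimes> 1) F, evaluated at the point x (x_1..x_N), component e_{c_1}\<otimes>..\<otimes>e_{c_N}.\<close>
definition pibar :: "nat \<Rightarrow> (nat \<Rightarrow> lam poly) \<Rightarrow> (nat \<Rightarrow> complex) \<Rightarrow> (nat \<Rightarrow> nat) \<Rightarrow> complex" where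
  "pibar N F x c = vac (fold (\<lambda>i h. Phi (c i) (x i) h) [2..<Suc N] (poly (F (c 1)) (lam_const (x 1))))"

text \<open>Heckman--Dunkl operator D_1^{(N)} applied to a (C^s)^{\<otimes>N}-valued function g.\<close>
definition dunkl1 :: "nat \<Rightarrow> complex \<Rightarrow> ((nat \<Rightarrow> complex) \<Rightarrow> (nat \<Rightarrow> nat) \<Rightarrow> complex)
    \<Rightarrow> (nat \<Rightarrow> complex) \<Rightarrow> (nat \<Rightarrow> nat) \<Rightarrow> complex" where
  "dunkl1 N \<beta> g x c = x 1 * deriv (\<lambda>t. g (x(1 := t)) c) (x 1)
     + \<beta> * (\<Sum>j=2..N. x 1 / (x 1 - x j) * (g x c - g (x(1 := x j, j := x 1)) c))"

end

theory Submission
  imports Defs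
begin

text \<open>Applying <0|_+ Phi_{c_N}(x_N) ... Phi_{c_2}(x_2) is the ring homomorphism sending p_{a,k} to
  the power sum P_{a,k} = sum_{i >= 2, c_i = a} x_i^k, so pibar F is F_{c_1}(x_1) evaluated at these
  power sums, and z d/dz yields the derivative term of the Dunkl operator. The residue in D equals
  sum_m g_m sum_{u<m} z^u p_{c,m-1-u}, where g(xi) = Phi_c^{-1}(xi) Phi_c(z) F(xi). Substituting the
  power sums and z = x_1, every j with c_j = c contributes the divided difference
  (g(x_1) - g(x_j)) / (x_1 - x_j). Finally g(x_j) is pibar F at x with x_1 and x_j swapped, because
  Phi_c^{-1}(x_j) Phi_c(x_1) trades x_j^k for x_1^k in P_{c,k}.\<close>

locale comm_ring_hom =
  fixes h :: "'a::comm_ring_1 \<Rightarrow> 'b::comm_ring_1"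
  assumes hom_add: "h (x + y) = h x + h y"
    and hom_mult: "h (x * y) = h x * h y"
    and hom_one: "h 1 = 1"
begin

lemma hom_zero: "h 0 = 0"
  using hom_add[of 0 0] by simp

lemma hom_uminus: "h (- x) = - h x"
  using hom_add[of x "- x"] by (simp add: hom_zero eq_neg_iff_add_eq_0 add.commute)

lemma hom_diff: "h (x - y) = h x - h y"
  using hom_add[of x "- y"] by (simp add: hom_uminus)

lemma hom_sum: "h (sum f A) = (\<Sum>a\<in>A. h (f a))"
  by (induction A rule: infinite_finite_induct) (simp_all add: hom_zero hom_add)

lemma hom_prod: "h (prod f A) = (\<Prod>a\<in>A. h (f a))"
  by (induction A rule: infinite_finite_induct) (simp_all add: hom_one hom_mult)

lemma hom_power: "h (x ^ n) = h x ^ n"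
  by (induction n) (simp_all add: hom_one hom_mult)

lemma hom_of_nat: "h (of_nat n) = of_nat n"
  by (induction n) (simp_all add: hom_zero hom_one hom_add)

lemma map_poly_add: "map_poly h (p + q) = map_poly h p + map_poly h q"
  by (rule poly_eqI) (simp add: coeff_map_poly hom_zero hom_add)

lemma map_poly_mult: "map_poly h (p * q) = map_poly h p * map_poly h q"
  by (rule poly_eqI) (simp add: coeff_map_poly coeff_mult hom_zero hom_sum hom_mult)

lemma comm_ring_hom_poly_map_poly: "comm_ring_hom (\<lambda>p. poly (map_poly h p) y)"
  by unfold_locales (simp_all add: map_poly_add map_poly_mult hom_one)

lemma hom_poly: "h (poly p y) = poly (map_poly h p) (h y)"
  by (induction p rule: pCons_induct) (simp_all add: map_poly_pCons hom_zero hom_add hom_mult)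

lemma map_poly_smult: "map_poly h (smult a p) = smult (h a) (map_poly h p)"
  by (rule poly_eqI) (simp add: coeff_map_poly hom_zero hom_mult)

lemma poly_map_poly_monom: "poly (map_poly h (monom a k)) y = h a * y ^ k"
  by (simp add: map_poly_monom hom_zero poly_monom)

lemma hom_lam_subst: "h (lam_subst \<sigma> \<iota> f) = lam_subst (\<lambda>v. h (\<sigma> v)) (\<lambda>b. h (\<iota> b)) f"
  by (simp add: lam_subst_def hom_sum hom_mult hom_prod hom_power)

end

definition monomial_value :: "(nat \<times> nat \<Rightarrow> 'r::comm_ring_1) \<Rightarrow> (nat \<times> nat \<Rightarrow>\<^sub>0 nat) \<Rightarrow> 'r" where
  "monomial_value \<sigma> m = (\<Prod>v\<in>Poly_Mapping.keys m. \<sigma> v ^ Poly_Mapping.lookup m v)"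

lemma monomial_value_superset:
  "finite S \<Longrightarrow> Poly_Mapping.keys m \<subseteq> S \<Longrightarrow>
    monomial_value \<sigma> m = (\<Prod>v\<in>S. \<sigma> v ^ Poly_Mapping.lookup m v)"
  unfolding monomial_value_def by (rule prod.mono_neutral_left) (auto simp: in_keys_iff)

lemma monomial_value_zero: "monomial_value \<sigma> 0 = 1"
  by (simp add: monomial_value_def)

lemma monomial_value_add: "monomial_value \<sigma> (m + n) = monomial_value \<sigma> m * monomial_value \<sigma> n"
proof -
  let ?S = "Poly_Mapping.keys m \<union> Poly_Mapping.keys n"
  have "monomial_value \<sigma> (m + n) = (\<Prod>v\<in>?S. \<sigma> v ^ Poly_Mapping.lookup (m + n) v)"
    by (rule monomial_value_superset) (auto dest: keys_add[THEN subsetD])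
  also have "\<dots> = (\<Prod>v\<in>?S. \<sigma> v ^ Poly_Mapping.lookup m v) * (\<Prod>v\<in>?S. \<sigma> v ^ Poly_Mapping.lookup n v)"
    by (simp add: lookup_add power_add prod.distrib)
  also have "\<dots> = monomial_value \<sigma> m * monomial_value \<sigma> n"
    by (simp add: monomial_value_superset[of ?S])
  finally show ?thesis .
qed

definition lam_eval :: "(nat \<times> nat \<Rightarrow> complex) \<Rightarrow> lam \<Rightarrow> complex" where
  "lam_eval \<sigma> = lam_subst \<sigma> (\<lambda>b. b)"

lemma lam_eval_superset:
  "finite S \<Longrightarrow> Poly_Mapping.keys f \<subseteq> S \<Longrightarrow>
    lam_eval \<sigma> f = (\<Sum>m\<in>S. Poly_Mapping.lookup f m * monomial_value \<sigma> m)"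
  unfolding lam_eval_def lam_subst_def monomial_value_def[symmetric]
  by (rule sum.mono_neutral_left) (auto simp: in_keys_iff)

lemma lam_eval_single: "lam_eval \<sigma> (Poly_Mapping.single m a) = a * monomial_value \<sigma> m"
  by (simp add: lam_eval_def lam_subst_def monomial_value_def)

lemma lam_eval_add: "lam_eval \<sigma> (f + g) = lam_eval \<sigma> f + lam_eval \<sigma> g"
proof -
  let ?S = "Poly_Mapping.keys f \<union> Poly_Mapping.keys g"
  have "lam_eval \<sigma> (f + g) = (\<Sum>m\<in>?S. Poly_Mapping.lookup (f + g) m * monomial_value \<sigma> m)"
    by (rule lam_eval_superset) (auto dest: keys_add[THEN subsetD])
  then show ?thesis
    by (simp add: lookup_add distrib_right sum.distrib lam_eval_superset[of ?S])
qed

lemma lam_eval_zero: "lam_eval \<sigma> 0 = 0"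
  by (simp add: lam_eval_def lam_subst_def)

lemma lam_eval_one: "lam_eval \<sigma> 1 = 1"
  using lam_eval_single[of \<sigma> 0 1] by (simp add: monomial_value_zero)

lemma lam_eval_sum: "lam_eval \<sigma> (sum f A) = (\<Sum>a\<in>A. lam_eval \<sigma> (f a))"
  by (induction A rule: infinite_finite_induct) (simp_all add: lam_eval_zero lam_eval_add)

lemma poly_mapping_sum_single:
  "f = (\<Sum>k\<in>Poly_Mapping.keys f. Poly_Mapping.single k (Poly_Mapping.lookup f k))"
  by (rule poly_mapping_eqI)
    (simp add: lookup_sum lookup_single when_def in_keys_iff sum.delta' split: if_splits)

lemma lam_eval_mult: "lam_eval \<sigma> (f * g) = lam_eval \<sigma> f * lam_eval \<sigma> g"
proof -
  let ?F = "Poly_Mapping.keys f" and ?G = "Poly_Mapping.keys g"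
  have "f * g = (\<Sum>k\<in>?F. Poly_Mapping.single k (Poly_Mapping.lookup f k)) *
                (\<Sum>l\<in>?G. Poly_Mapping.single l (Poly_Mapping.lookup g l))"
    by (subst poly_mapping_sum_single[of f], subst poly_mapping_sum_single[of g]) (rule refl)
  also have "\<dots> = (\<Sum>k\<in>?F. \<Sum>l\<in>?G.
      Poly_Mapping.single (k + l) (Poly_Mapping.lookup f k * Poly_Mapping.lookup g l))"
    by (simp add: sum_product mult_single)
  finally have "lam_eval \<sigma> (f * g) = (\<Sum>k\<in>?F. \<Sum>l\<in>?G.
      (Poly_Mapping.lookup f k * monomial_value \<sigma> k) * (Poly_Mapping.lookup g l * monomial_value \<sigma> l))"
    by (simp add: lam_eval_sum lam_eval_single monomial_value_add mult_ac)
  then show ?thesis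
    by (simp add: lam_eval_def lam_subst_def monomial_value_def sum_product)
qed

interpretation lam_eval: comm_ring_hom "lam_eval \<sigma>" for \<sigma>
  by unfold_locales (simp_all add: lam_eval_add lam_eval_mult lam_eval_one)

lemma lam_eval_var: "lam_eval \<sigma> (lam_var a k) = \<sigma> (a, k)"
  by (simp add: lam_var_def lam_eval_single monomial_value_def)

lemma lam_eval_const: "lam_eval \<sigma> (lam_const b) = b"
  by (simp add: lam_const_def lam_eval_single monomial_value_zero)

lemma vac_eq_lam_eval: "vac f = lam_eval (\<lambda>_. 0) f"
proof -
  have value_at_zero: "monomial_value (\<lambda>_. 0::complex) m = (if m = 0 then 1 else 0)" for m
  proof (cases "m = 0")
    case False
    then obtain v where v: "v \<in> Poly_Mapping.keys m"
      by (metis keys_eq_empty ex_in_conv)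
    then have "Poly_Mapping.lookup m v \<noteq> 0"
      by (simp add: in_keys_iff)
    with False v show ?thesis
      by (auto simp: monomial_value_def prod_zero_iff)
  qed (simp add: monomial_value_zero)
  have "lam_eval (\<lambda>_. 0) f
      = (\<Sum>m\<in>insert 0 (Poly_Mapping.keys f). Poly_Mapping.lookup f m * monomial_value (\<lambda>_. 0) m)"
    by (rule lam_eval_superset) auto
  also have "\<dots> = vac f"
    by (simp add: value_at_zero vac_def if_distrib cong: if_cong)
  finally show ?thesis ..
qed

lemma lam_eval_Phi:
  "lam_eval \<sigma> (Phi c w f) = lam_eval (\<lambda>v. \<sigma> v + (if c = fst v then w ^ snd v else 0)) f"
proof -
  have "lam_eval \<sigma> (Phi c w f) = lam_subst
      (\<lambda>v. lam_eval \<sigma> ((\<lambda>(a, k). lam_var a k + (if a = c then lam_const (w ^ k) else 0)) v))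
      (\<lambda>b. lam_eval \<sigma> (lam_const b)) f"
    unfolding Phi_def by (rule lam_eval.hom_lam_subst)
  also have "(\<lambda>v. lam_eval \<sigma> ((\<lambda>(a, k). lam_var a k + (if a = c then lam_const (w ^ k) else 0)) v))
      = (\<lambda>v. \<sigma> v + (if c = fst v then w ^ snd v else 0))"
    by (auto simp: lam_eval.hom_add lam_eval_var lam_eval_const lam_eval_zero)
  also have "(\<lambda>b. lam_eval \<sigma> (lam_const b)) = (\<lambda>b. b)"
    by (simp add: lam_eval_const)
  finally show ?thesis
    unfolding lam_eval_def .
qed

lemma lam_eval_fold_Phi:
  "lam_eval \<sigma> (fold (\<lambda>i h. Phi (c i) (x i) h) is f)
    = lam_eval (\<lambda>v. \<sigma> v + (\<Sum>i\<leftarrow>is. if c i = fst v then x i ^ snd v else 0)) f"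
  by (induction "is" arbitrary: \<sigma> f) (simp_all add: lam_eval_Phi add_ac)

definition lam_poly_eval :: "(nat \<times> nat \<Rightarrow> complex) \<Rightarrow> complex \<Rightarrow> lam poly \<Rightarrow> complex" where
  "lam_poly_eval \<sigma> z p = poly (map_poly (lam_eval \<sigma>) p) z"

interpretation lam_poly_eval: comm_ring_hom "lam_poly_eval \<sigma> z" for \<sigma> z
  unfolding lam_poly_eval_def by (rule lam_eval.comm_ring_hom_poly_map_poly)

lemma lam_poly_eval_pCons: "lam_poly_eval \<sigma> z (pCons f p) = lam_eval \<sigma> f + z * lam_poly_eval \<sigma> z p"
  by (simp add: lam_poly_eval_def map_poly_pCons lam_eval_zero)

lemma lam_poly_eval_smult: "lam_poly_eval \<sigma> z (smult f p) = lam_eval \<sigma> f * lam_poly_eval \<sigma> z p"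
  by (simp add: lam_poly_eval_def lam_eval.map_poly_smult)

definition power_sums :: "nat \<Rightarrow> (nat \<Rightarrow> complex) \<Rightarrow> (nat \<Rightarrow> nat) \<Rightarrow> nat \<times> nat \<Rightarrow> complex" where
  "power_sums N x c v = (\<Sum>i\<in>{2..N}. if c i = fst v then x i ^ snd v else 0)"

lemma pibar_eq_lam_poly_eval: "pibar N F x c = lam_poly_eval (power_sums N x c) (x 1) (F (c 1))"
proof -
  have "sum_list (map f [2..<Suc N]) = sum f {2..N}" for f :: "nat \<Rightarrow> complex"
    by (metis sum_set_upt_conv_sum_list_nat set_upt atLeastLessThanSuc_atLeastAtMost)
  then show ?thesis
    by (simp add: pibar_def vac_eq_lam_eval lam_eval_fold_Phi lam_eval.hom_poly lam_eval_const
        lam_poly_eval_def power_sums_def[abs_def])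
qed

lemma power_sums_Pair: "power_sums N x c (a, k) = (\<Sum>j | j \<in> {2..N} \<and> c j = a. x j ^ k)"
  unfolding power_sums_def fst_conv snd_conv by (rule sum.inter_filter[symmetric]) simp

lemma power_sums_upd_1: "power_sums N (x(1 := t)) c = power_sums N x c"
  unfolding power_sums_def by (intro ext sum.cong) auto

text \<open>The action of Phi_c^{-1}(y) Phi_c(z) on evaluation points.\<close>
definition shift_point :: "(nat \<times> nat \<Rightarrow> complex) \<Rightarrow> nat \<Rightarrow> complex \<Rightarrow> complex \<Rightarrow> nat \<times> nat \<Rightarrow> complex"
  where "shift_point \<sigma> c z y v = \<sigma> v + (if fst v = c then z ^ snd v - y ^ snd v else 0)"

lemma shift_point_same [simp]: "shift_point \<sigma> c z z = \<sigma>"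
  by (simp add: shift_point_def fun_eq_iff)

lemma power_sums_swap:
  assumes "j \<in> {2..N}"
  shows "power_sums N (x(1 := x j, j := x 1)) c = shift_point (power_sums N x c) (c j) (x 1) (x j)"
proof
  fix v
  let ?rest = "\<Sum>i\<in>{2..N} - {j}. if c i = fst v then x i ^ snd v else 0"
  have "(\<Sum>i\<in>{2..N} - {j}. if c i = fst v then (x(1 := x j, j := x 1)) i ^ snd v else 0) = ?rest"
    by (rule sum.cong) auto
  then have "power_sums N (x(1 := x j, j := x 1)) c v = (if c j = fst v then x 1 ^ snd v else 0) + ?rest"
    unfolding power_sums_def using assms by (subst sum.remove[of _ j]) auto
  moreover have "power_sums N x c v = (if c j = fst v then x j ^ snd v else 0) + ?rest"
    unfolding power_sums_def using assms by (subst sum.remove[of _ j]) auto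
  ultimately show "power_sums N (x(1 := x j, j := x 1)) c v
      = shift_point (power_sums N x c) (c j) (x 1) (x j) v"
    by (auto simp: shift_point_def)
qed

lemma pibar_swap:
  assumes "j \<in> {2..N}"
  shows "pibar N F (x(1 := x j, j := x 1)) c
    = lam_poly_eval (shift_point (power_sums N x c) (c j) (x 1) (x j)) (x j) (F (c 1))"
  using assms unfolding pibar_eq_lam_poly_eval power_sums_swap[OF assms] by simp

lemma poly_eq_sum_coeff_le:
  fixes p :: "'a::comm_ring_1 poly"
  assumes "degree p \<le> n"
  shows "poly p y = (\<Sum>i\<le>n. coeff p i * y ^ i)"
  unfolding poly_altdef using assms
  by (intro sum.mono_neutral_left) (auto simp: coeff_eq_0)

lemma poly_diff_eq_mult_sum:
  fixes p :: "'a::comm_ring_1 poly"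
  assumes "degree p \<le> n"
  shows "poly p a - poly p b = (a - b) * (\<Sum>m\<le>n. coeff p m * (\<Sum>u<m. b ^ (m - Suc u) * a ^ u))"
proof -
  have "poly p a - poly p b = (\<Sum>m\<le>n. coeff p m * (a ^ m - b ^ m))"
    by (simp add: poly_eq_sum_coeff_le[OF assms] right_diff_distrib sum_subtractf)
  then show ?thesis
    by (simp add: power_diff_sumr2 sum_distrib_left mult_ac)
qed

lemma sum_divided_differences:
  fixes p :: "'a::field poly"
  assumes "degree p \<le> n" and "finite J" and "\<forall>j\<in>J. b j \<noteq> a"
  shows "(\<Sum>m\<le>n. coeff p m * (\<Sum>u<m. a ^ u * (\<Sum>j\<in>J. b j ^ (m - Suc u))))
    = (\<Sum>j\<in>J. (poly p a - poly p (b j)) / (a - b j))"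
proof -
  have "(poly p a - poly p (b j)) / (a - b j) = (\<Sum>m\<le>n. coeff p m * (\<Sum>u<m. b j ^ (m - Suc u) * a ^ u))"
    if "j \<in> J" for j
  proof -
    have "a - b j \<noteq> 0"
      using assms(3) that by auto
    then show ?thesis
      by (simp add: poly_diff_eq_mult_sum[OF assms(1)])
  qed
  then have "(\<Sum>j\<in>J. (poly p a - poly p (b j)) / (a - b j))
      = (\<Sum>j\<in>J. \<Sum>m\<le>n. \<Sum>u<m. coeff p m * (a ^ u * b j ^ (m - Suc u)))"
    by (simp add: sum_distrib_left mult_ac)
  also have "\<dots> = (\<Sum>m\<le>n. coeff p m * (\<Sum>u<m. a ^ u * (\<Sum>j\<in>J. b j ^ (m - Suc u))))"
    by (subst sum.swap) (simp add: sum_distrib_left sum.swap[of _ J])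
  finally show ?thesis ..
qed

lemma lmult_eq_sum_superset:
  "finite T \<Longrightarrow> {i. A i \<noteq> 0 \<and> B (n - i) \<noteq> 0} \<subseteq> T \<Longrightarrow> lmult A B n = (\<Sum>i\<in>T. A i * B (n - i))"
  unfolding lmult_def by (rule sum.mono_neutral_left) auto

lemma lmult_kernel_phi_minus:
  "lmult kernel_ser (phi_minus c) (-1 - int m) = (\<Sum>u<m. [:0, 1:] ^ u * [:lam_var c (m - Suc u):])"
proof -
  have "lmult kernel_ser (phi_minus c) (-1 - int m)
      = (\<Sum>i\<in>(\<lambda>u. -2 - int u) ` {..<m}. kernel_ser i * phi_minus c (-1 - int m - i))"
  proof (rule lmult_eq_sum_superset)
    show "{i. kernel_ser i \<noteq> 0 \<and> phi_minus c (-1 - int m - i) \<noteq> 0} \<subseteq> (\<lambda>u. -2 - int u) ` {..<m}"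
    proof
      fix i assume "i \<in> {i. kernel_ser i \<noteq> 0 \<and> phi_minus c (-1 - int m - i) \<noteq> 0}"
      then have "i = -2 - int (nat (-2 - i))" and "nat (-2 - i) < m"
        by (auto simp: kernel_ser_def phi_minus_def split: if_splits)
      then show "i \<in> (\<lambda>u. -2 - int u) ` {..<m}"
        by blast
    qed
  qed simp
  also have "\<dots> = (\<Sum>u<m. [:0, 1:] ^ u * [:lam_var c (m - Suc u):])"
    by (subst sum.reindex)
      (auto simp: inj_on_def kernel_ser_def phi_minus_def nat_diff_distrib' intro!: sum.cong)
  finally show ?thesis .
qed

lemma lres_kernel_phi_minus:
  fixes G :: "lam poly poly"
  shows "lres (lmult (lmult kernel_ser (phi_minus c)) (\<lambda>n. if 0 \<le> n then coeff G (nat n) else 0))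
    = (\<Sum>m\<le>degree G. (\<Sum>u<m. [:0, 1:] ^ u * [:lam_var c (m - Suc u):]) * coeff G m)"
proof -
  let ?K = "lmult kernel_ser (phi_minus c)"
  have "lres (lmult ?K (\<lambda>n. if 0 \<le> n then coeff G (nat n) else 0))
      = (\<Sum>i\<in>(\<lambda>m. -1 - int m) ` {..degree G}. ?K i * coeff G (nat (-1 - i)))"
    unfolding lres_def
  proof (rule trans[OF lmult_eq_sum_superset sum.cong])
    show "{i. ?K i \<noteq> 0 \<and> (if 0 \<le> -1 - i then coeff G (nat (-1 - i)) else 0) \<noteq> 0}
        \<subseteq> (\<lambda>m. -1 - int m) ` {..degree G}"
    proof
      fix i assume "i \<in> {i. ?K i \<noteq> 0 \<and> (if 0 \<le> -1 - i then coeff G (nat (-1 - i)) else 0) \<noteq> 0}"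
      then have "i = -1 - int (nat (-1 - i))" and "nat (-1 - i) \<le> degree G"
        by (auto intro: le_degree split: if_splits)
      then show "i \<in> (\<lambda>m. -1 - int m) ` {..degree G}"
        by blast
    qed
  qed auto
  also have "\<dots> = (\<Sum>m\<le>degree G. ?K (-1 - int m) * coeff G m)"
    by (subst sum.reindex) (auto simp: inj_on_def)
  finally show ?thesis
    by (simp add: lmult_kernel_phi_minus)
qed

lemma poly_map_lam_poly_eval_PhiInvPhi:
  "poly (map_poly (lam_poly_eval \<sigma> z) (PhiInvPhi c f)) y = lam_eval (shift_point \<sigma> c z y) f"
proof -
  interpret Psi: comm_ring_hom "\<lambda>g. poly (map_poly (lam_poly_eval \<sigma> z) g) y"
    by (rule lam_poly_eval.comm_ring_hom_poly_map_poly)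
  have const: "poly (map_poly (lam_poly_eval \<sigma> z) [:q:]) y = lam_poly_eval \<sigma> z q" for q
    by (simp add: map_poly_pCons lam_poly_eval.hom_zero)
  show ?thesis
    unfolding PhiInvPhi_def Psi.hom_lam_subst lam_eval_def
    by (rule arg_cong2[where f = "\<lambda>\<sigma> \<iota>. lam_subst \<sigma> \<iota> f"])
      (auto intro!: ext simp: shift_point_def const Psi.hom_add Psi.hom_diff Psi.hom_zero
        lam_poly_eval.poly_map_poly_monom lam_eval.poly_map_poly_monom[folded lam_poly_eval_def]
        lam_poly_eval.hom_one lam_poly_eval_pCons lam_poly_eval.hom_zero lam_eval_var lam_eval_const
        lam_eval_one lam_eval_zero)
qed

definition shifted_poly :: "nat \<Rightarrow> lam poly \<Rightarrow> lam poly poly" where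
  "shifted_poly c p = (\<Sum>j\<le>degree p. PhiInvPhi c (coeff p j) * monom 1 j)"

lemma shifted_ser_eq_coeff:
  "shifted_ser c p = (\<lambda>n. if 0 \<le> n then coeff (shifted_poly c p) (nat n) else 0)"
  by (simp add: shifted_ser_def shifted_poly_def Let_def fun_eq_iff)

lemma poly_map_lam_poly_eval_shifted_poly:
  "poly (map_poly (lam_poly_eval \<sigma> z) (shifted_poly c p)) y = lam_poly_eval (shift_point \<sigma> c z y) y p"
proof -
  interpret Psi: comm_ring_hom "\<lambda>g. poly (map_poly (lam_poly_eval \<sigma> z) g) y"
    by (rule lam_poly_eval.comm_ring_hom_poly_map_poly)
  have "poly (map_poly (lam_poly_eval \<sigma> z) (shifted_poly c p)) y
      = (\<Sum>j\<le>degree p. lam_eval (shift_point \<sigma> c z y) (coeff p j) * y ^ j)"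
    by (simp add: shifted_poly_def Psi.hom_sum Psi.hom_mult lam_poly_eval.poly_map_poly_monom
        poly_map_lam_poly_eval_PhiInvPhi lam_poly_eval.hom_one)
  also have "\<dots> = lam_poly_eval (shift_point \<sigma> c z y) y p"
    by (simp add: lam_poly_eval_def poly_eq_sum_coeff_le[OF map_poly_degree_leq] coeff_map_poly
        lam_eval_zero)
  finally show ?thesis .
qed

lemma lam_poly_eval_residue:
  assumes "\<forall>j\<in>{2..N}. x j \<noteq> x 1"
  shows "lam_poly_eval (power_sums N x c) (x 1)
      (lres (lmult (lmult kernel_ser (phi_minus a)) (shifted_ser a (F (c 1)))))
    = (\<Sum>j | j \<in> {2..N} \<and> c j = a. (pibar N F x c - pibar N F (x(1 := x j, j := x 1)) c) / (x 1 - x j))"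
proof -
  let ?P = "power_sums N x c" and ?J = "{j. j \<in> {2..N} \<and> c j = a}"
  let ?E = "lam_poly_eval ?P (x 1)"
  define G where "G = map_poly ?E (shifted_poly a (F (c 1)))"
  have E_kernel: "(\<Sum>u<m. ?E ([:0, 1:] ^ u) * ?E [:lam_var a (m - Suc u):])
      = (\<Sum>u<m. x 1 ^ u * (\<Sum>j\<in>?J. x j ^ (m - Suc u)))" for m
    by (simp add: lam_poly_eval.hom_power lam_poly_eval_pCons lam_poly_eval.hom_zero lam_eval_var
        lam_eval_zero lam_eval_one power_sums_Pair mult_ac)
  have "?E (lres (lmult (lmult kernel_ser (phi_minus a)) (shifted_ser a (F (c 1)))))
      = (\<Sum>m\<le>degree (shifted_poly a (F (c 1))).
          coeff G m * (\<Sum>u<m. x 1 ^ u * (\<Sum>j\<in>?J. x j ^ (m - Suc u))))"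
    unfolding shifted_ser_eq_coeff lres_kernel_phi_minus lam_poly_eval.hom_sum lam_poly_eval.hom_mult
      E_kernel
    by (simp add: G_def coeff_map_poly lam_poly_eval.hom_zero mult.commute)
  also have "\<dots> = (\<Sum>j\<in>?J. (poly G (x 1) - poly G (x j)) / (x 1 - x j))"
    using assms by (intro sum_divided_differences) (auto simp: G_def map_poly_degree_leq)
  also have "\<dots> = (\<Sum>j\<in>?J. (pibar N F x c - pibar N F (x(1 := x j, j := x 1)) c) / (x 1 - x j))"
  proof (rule sum.cong[OF refl])
    fix j assume "j \<in> ?J"
    then have "j \<in> {2..N}" and "c j = a"
      by auto
    then have "poly G (x j) = pibar N F (x(1 := x j, j := x 1)) c"
      using pibar_swap[of j N F x c] by (simp add: G_def poly_map_lam_poly_eval_shifted_poly)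
    moreover have "poly G (x 1) = pibar N F x c"
      by (simp add: G_def poly_map_lam_poly_eval_shifted_poly pibar_eq_lam_poly_eval)
    ultimately show "(poly G (x 1) - poly G (x j)) / (x 1 - x j)
        = (pibar N F x c - pibar N F (x(1 := x j, j := x 1)) c) / (x 1 - x j)"
      by simp
  qed
  finally show ?thesis .
qed

lemma coeff_zddz: "coeff (zddz p) n = of_nat n * coeff p n"
  by (cases "n \<le> degree p") (simp_all add: zddz_def nth_default_def coeff_eq_0 del: upt_Suc)

lemma lam_poly_eval_zddz:
  "lam_poly_eval \<sigma> z (zddz p) = z * poly (pderiv (map_poly (lam_eval \<sigma>) p)) z"
proof -
  have "map_poly (lam_eval \<sigma>) (zddz p) = pCons 0 (pderiv (map_poly (lam_eval \<sigma>) p))"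
    by (rule poly_eqI)
      (auto simp: coeff_map_poly coeff_zddz coeff_pCons coeff_pderiv lam_eval_zero lam_eval.hom_mult
        lam_eval.hom_of_nat simp del: of_nat_Suc split: nat.splits)
  then show ?thesis
    by (simp add: lam_poly_eval_def)
qed

lemma deriv_pibar:
  "deriv (\<lambda>t. pibar N F (x(1 := t)) c) (x 1)
    = poly (pderiv (map_poly (lam_eval (power_sums N x c)) (F (c 1)))) (x 1)"
  unfolding pibar_eq_lam_poly_eval power_sums_upd_1
  by (simp add: lam_poly_eval_def DERIV_imp_deriv poly_DERIV)

theorem proposition3p1:
  fixes s N :: nat and \<beta> :: complex and F :: "nat \<Rightarrow> lam poly"
    and x :: "nat \<Rightarrow> complex" and c :: "nat \<Rightarrow> nat"
  assumes "s \<ge> 1" and "N \<ge> 2"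
    and "\<forall>a\<in>{1..s}. \<forall>j. \<forall>m\<in>Poly_Mapping.keys (coeff (F a) j). \<forall>v\<in>Poly_Mapping.keys m. fst v \<in> {1..s}"
    and "\<forall>i\<in>{1..N}. c i \<in> {1..s}"
    and "\<forall>j\<in>{2..N}. x j \<noteq> x 1"
  shows "pibar N (Dop s \<beta> F) x c = dunkl1 N \<beta> (pibar N F) x c"
proof -
  define g where "g = map_poly (lam_eval (power_sums N x c)) (F (c 1))"
  define T where "T j = (pibar N F x c - pibar N F (x(1 := x j, j := x 1)) c) / (x 1 - x j)" for j
  have "pibar N (Dop s \<beta> F) x c
      = x 1 * poly (pderiv g) (x 1) + x 1 * \<beta> * (\<Sum>a=1..s. \<Sum>j | j \<in> {2..N} \<and> c j = a. T j)"
    using lam_poly_eval_residue[OF assms(5)]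
    by (simp add: pibar_eq_lam_poly_eval Dop_def lam_poly_eval.hom_add lam_poly_eval.hom_mult
        lam_poly_eval.hom_sum lam_poly_eval_zddz lam_poly_eval_pCons lam_poly_eval_smult
        lam_poly_eval.hom_zero lam_eval_zero lam_eval_const g_def T_def)
  also have "(\<Sum>a=1..s. \<Sum>j | j \<in> {2..N} \<and> c j = a. T j) = (\<Sum>j=2..N. T j)"
    by (rule sum.group) (use assms(4) in auto)
  also have "x 1 * poly (pderiv g) (x 1) + x 1 * \<beta> * (\<Sum>j=2..N. T j) = dunkl1 N \<beta> (pibar N F) x c"
    unfolding dunkl1_def deriv_pibar by (simp add: g_def T_def sum_distrib_left mult_ac)
  finally show ?thesis .
qed

end
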